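(* Let $n\ge 2$ and let $F$ be the free loop on $n$ generators $x_1,\dots,x_n$. Then $\gamma_{n-1}\mathrm{LMlt}(F/F_3)$ is non-trivial.
   Context: A loop is a set with a product and two-sided identity in which all left and right multiplications are bijective; $\mathrm{LMlt}(L)$ is the group of permutations of $L$ generated by the left multiplications $L_a\colon x\mapsto ax$. For a group $G$, $\gamma_1G=G$ and $\gamma_{k+1}G=[G,\gamma_kG]$. For a loop $F$ and a normal subloop $N$, $[N,F]$ denotes the smallest subloop of $N$ which is normal in $F$ and such that $N/[N,F]$ is contained in the centre of $F/[N,F]$. Bruck's lower central series is $F_1=F$, $F_{k+1}=[F_k,F]$. *)

theory Defs
  imports "HOL-Algebra.Algebra"
begin

definition is_loop :: "'a monoid \<Rightarrow> bool" where
  "is_loop L \<longleftrightarrow>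
     \<one>\<^bsub>L\<^esub> \<in> carrier L \<and>
     (\<forall>x\<in>carrier L. \<forall>y\<in>carrier L. x \<otimes>\<^bsub>L\<^esub> y \<in> carrier L) \<and>
     (\<forall>x\<in>carrier L. \<one>\<^bsub>L\<^esub> \<otimes>\<^bsub>L\<^esub> x = x \<and> x \<otimes>\<^bsub>L\<^esub> \<one>\<^bsub>L\<^esub> = x) \<and>
     (\<forall>a\<in>carrier L. bij_betw (\<lambda>x. a \<otimes>\<^bsub>L\<^esub> x) (carrier L) (carrier L)) \<and>
     (\<forall>a\<in>carrier L. bij_betw (\<lambda>x. x \<otimes>\<^bsub>L\<^esub> a) (carrier L) (carrier L))"

definition subloop :: "'a set \<Rightarrow> 'a monoid \<Rightarrow> bool" where
  "subloop N L \<longleftrightarrow> N \<subseteq> carrier L \<and> \<one>\<^bsub>L\<^esub> \<in> N \<and>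
     (\<forall>a\<in>N. \<forall>b\<in>N. a \<otimes>\<^bsub>L\<^esub> b \<in> N) \<and>
     (\<forall>a\<in>N. \<forall>b\<in>N. \<forall>x\<in>carrier L. a \<otimes>\<^bsub>L\<^esub> x = b \<longrightarrow> x \<in> N) \<and>
     (\<forall>a\<in>N. \<forall>b\<in>N. \<forall>x\<in>carrier L. x \<otimes>\<^bsub>L\<^esub> a = b \<longrightarrow> x \<in> N)"

definition lcos :: "'a monoid \<Rightarrow> 'a \<Rightarrow> 'a set \<Rightarrow> 'a set" where
  "lcos L x N = (\<lambda>n. x \<otimes>\<^bsub>L\<^esub> n) ` N"

definition rcos :: "'a monoid \<Rightarrow> 'a set \<Rightarrow> 'a \<Rightarrow> 'a set" where
  "rcos L N x = (\<lambda>n. n \<otimes>\<^bsub>L\<^esub> x) ` N"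

definition normal_subloop :: "'a set \<Rightarrow> 'a monoid \<Rightarrow> bool" where
  "normal_subloop N L \<longleftrightarrow> subloop N L \<and>
     (\<forall>x\<in>carrier L. \<forall>y\<in>carrier L.
        lcos L x N = rcos L N x \<and>
        rcos L (lcos L x N) y = lcos L x (rcos L N y) \<and>
        lcos L x (lcos L y N) = lcos L (x \<otimes>\<^bsub>L\<^esub> y) N)"

definition loop_centre :: "'a monoid \<Rightarrow> 'a set" where
  "loop_centre L = {z \<in> carrier L. \<forall>x\<in>carrier L. \<forall>y\<in>carrier L.
      z \<otimes>\<^bsub>L\<^esub> x = x \<otimes>\<^bsub>L\<^esub> z \<and>
      (z \<otimes>\<^bsub>L\<^esub> x) \<otimes>\<^bsub>L\<^esub> y = z \<otimes>\<^bsub>L\<^esub> (x \<otimes>\<^bsub>L\<^esub> y) \<and>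
      (x \<otimes>\<^bsub>L\<^esub> z) \<otimes>\<^bsub>L\<^esub> y = x \<otimes>\<^bsub>L\<^esub> (z \<otimes>\<^bsub>L\<^esub> y) \<and>
      (x \<otimes>\<^bsub>L\<^esub> y) \<otimes>\<^bsub>L\<^esub> z = x \<otimes>\<^bsub>L\<^esub> (y \<otimes>\<^bsub>L\<^esub> z)}"

text \<open>Quotient loop L/N: left cosets xN, with product of cosets the set product
  (which is the coset (xy)N when N is normal), identity N.\<close>
definition quot_loop :: "'a monoid \<Rightarrow> 'a set \<Rightarrow> 'a set monoid" where
  "quot_loop L N = \<lparr> carrier = (\<lambda>x. lcos L x N) ` carrier L,
     monoid.mult = (\<lambda>A B. {a \<otimes>\<^bsub>L\<^esub> b | a b. a \<in> A \<and> b \<in> B}),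
     monoid.one = N \<rparr>"

definition loop_comm :: "'a set \<Rightarrow> 'a monoid \<Rightarrow> 'a set" where
  "loop_comm N F = \<Inter> {M. M \<subseteq> N \<and> subloop M F \<and> normal_subloop M F \<and>
      (\<lambda>x. lcos F x M) ` N \<subseteq> loop_centre (quot_loop F M)}"

text \<open>Bruck's lower central series, F_1 = F, F_(k+1) = [F_k, F]; index k \<ge> 1.\<close>
primrec bruck_aux :: "'a monoid \<Rightarrow> nat \<Rightarrow> 'a set" where
  "bruck_aux F 0 = carrier F"
| "bruck_aux F (Suc k) = loop_comm (bruck_aux F k) F"

definition bruck_lcs :: "'a monoid \<Rightarrow> nat \<Rightarrow> 'a set" where
  "bruck_lcs F k = bruck_aux F (k - 1)"

definition LMlt :: "'a monoid \<Rightarrow> ('a \<Rightarrow> 'a) monoid" where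
  "LMlt L = (BijGroup (carrier L))\<lparr> carrier :=
     generate (BijGroup (carrier L))
       ((\<lambda>a. restrict (\<lambda>x. a \<otimes>\<^bsub>L\<^esub> x) (carrier L)) ` carrier L) \<rparr>"

definition grp_comm :: "('a, 'b) monoid_scheme \<Rightarrow> 'a set \<Rightarrow> 'a set \<Rightarrow> 'a set" where
  "grp_comm G A B = generate G
     {x \<otimes>\<^bsub>G\<^esub> y \<otimes>\<^bsub>G\<^esub> inv\<^bsub>G\<^esub> x \<otimes>\<^bsub>G\<^esub> inv\<^bsub>G\<^esub> y | x y. x \<in> A \<and> y \<in> B}"

primrec gamma_aux :: "('a, 'b) monoid_scheme \<Rightarrow> nat \<Rightarrow> 'a set" where
  "gamma_aux G 0 = carrier G"
| "gamma_aux G (Suc k) = grp_comm G (carrier G) (gamma_aux G k)"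

text \<open>gamma_1 G = G, gamma_(k+1) G = [G, gamma_k G]; index k \<ge> 1.\<close>
definition gamma :: "('a, 'b) monoid_scheme \<Rightarrow> nat \<Rightarrow> 'a set" where
  "gamma G k = gamma_aux G (k - 1)"

datatype lterm = Gen nat | E | Mul lterm lterm | LDiv lterm lterm | RDiv lterm lterm

fun gens_below :: "nat \<Rightarrow> lterm \<Rightarrow> bool" where
  "gens_below n (Gen i) = (i < n)"
| "gens_below n E = True"
| "gens_below n (Mul s t) = (gens_below n s \<and> gens_below n t)"
| "gens_below n (LDiv s t) = (gens_below n s \<and> gens_below n t)"
| "gens_below n (RDiv s t) = (gens_below n s \<and> gens_below n t)"

inductive leq :: "lterm \<Rightarrow> lterm \<Rightarrow> bool" where
  refl: "leq s s"
| sym: "leq s t \<Longrightarrow> leq t s"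
| trans: "leq s t \<Longrightarrow> leq t u \<Longrightarrow> leq s u"
| cMul: "leq s s' \<Longrightarrow> leq t t' \<Longrightarrow> leq (Mul s t) (Mul s' t')"
| cLDiv: "leq s s' \<Longrightarrow> leq t t' \<Longrightarrow> leq (LDiv s t) (LDiv s' t')"
| cRDiv: "leq s s' \<Longrightarrow> leq t t' \<Longrightarrow> leq (RDiv s t) (RDiv s' t')"
| idl: "leq (Mul E x) x"
| idr: "leq (Mul x E) x"
| ld1: "leq (LDiv x (Mul x y)) y"
| ld2: "leq (Mul x (LDiv x y)) y"
| rd1: "leq (RDiv (Mul y x) x) y"
| rd2: "leq (Mul (RDiv y x) x) y"

definition lclass :: "lterm \<Rightarrow> lterm set" where
  "lclass t = {s. leq t s}"

text \<open>Free loop on generators x_1..x_n (represented as Gen 0, ..., Gen (n-1)).\<close>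
definition free_loop :: "nat \<Rightarrow> lterm set monoid" where
  "free_loop n = \<lparr> carrier = lclass ` {t. gens_below n t},
     monoid.mult = (\<lambda>A B. lclass (Mul (SOME s. s \<in> A) (SOME t. t \<in> B))),
     monoid.one = lclass E \<rparr>"

end

theory Submission
  imports Defs
begin

text \<open>Fix \<open>m \<ge> 1\<close> and let \<open>Q\<close> be the loop on pairs \<open>(b, c)\<close>, \<open>b : \<nat> \<Rightarrow> \<int>\<close>, \<open>c : \<int>\<close>, with
  product \<open>(b, c)(b', c') = (b + b', c + c' + b 0 * (\<Prod>j=1..m. b' j))\<close>. The elements with \<open>b = 0\<close>
  are central, so the evaluation \<open>F \<rightarrow> Q\<close> sending the generator \<open>x\<^sub>i\<close> (indexed from \<open>0\<close>) to
  \<open>(e\<^sub>i, 0)\<close> maps \<open>F\<^sub>2\<close> into the centre, hence kills \<open>F\<^sub>3\<close> and descends to \<open>F/F\<^sub>3\<close>. Under it the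
  left multiplication \<open>L\<^sub>i\<close> of \<open>F/F\<^sub>3\<close> by \<open>x\<^sub>i\<close> becomes left multiplication by \<open>(e\<^sub>i, 0)\<close> on \<open>Q\<close>.
  For the left-normed commutators \<open>c\<^sub>0 = L\<^sub>0\<close>, \<open>c\<^sub>k = [L\<^sub>k, c\<^sub>k\<^sub>-\<^sub>1] \<in> \<gamma>\<^sub>k\<^sub>+\<^sub>1\<close> a direct computation
  shows that for \<open>1 \<le> k \<le> m\<close> the commutator \<open>c\<^sub>k\<close> acts on \<open>Q\<close> as
  \<open>(b, c) \<mapsto> (b, c + (-1)^k * (\<Prod>j=k+1..m. b j))\<close>. With \<open>k = m = n - 2\<close> the element
  \<open>c\<^sub>n\<^sub>-\<^sub>2 \<in> \<gamma>\<^sub>n\<^sub>-\<^sub>1\<close> moves the identity to \<open>(0, \<plusminus>1)\<close>; for \<open>n = 2\<close> already \<open>L\<^sub>0\<close> moves it.\<close>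

section \<open>Loops with division operations\<close>

lemma image_eq_by_witnesses:
  assumes "\<And>m. m \<in> N \<Longrightarrow> w m \<in> N \<and> f m = g (w m)"
    and "\<And>m. m \<in> N \<Longrightarrow> w' m \<in> N \<and> g m = f (w' m)"
  shows "f ` N = g ` N"
proof (intro equalityI image_subsetI)
  fix m assume "m \<in> N"
  with assms show "f m \<in> g ` N" "g m \<in> f ` N" by (metis image_eqI)+
qed

locale division_loop =
  fixes L :: "'a monoid" (structure) and ldiv rdiv :: "'a \<Rightarrow> 'a \<Rightarrow> 'a"
  assumes one_closed: "\<one> \<in> carrier L"
    and m_closed: "x \<in> carrier L \<Longrightarrow> y \<in> carrier L \<Longrightarrow> x \<otimes> y \<in> carrier L"
    and ldiv_closed: "x \<in> carrier L \<Longrightarrow> y \<in> carrier L \<Longrightarrow> ldiv x y \<in> carrier L"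
    and rdiv_closed: "x \<in> carrier L \<Longrightarrow> y \<in> carrier L \<Longrightarrow> rdiv x y \<in> carrier L"
    and l_one: "x \<in> carrier L \<Longrightarrow> \<one> \<otimes> x = x"
    and r_one: "x \<in> carrier L \<Longrightarrow> x \<otimes> \<one> = x"
    and ldiv_mult: "x \<in> carrier L \<Longrightarrow> y \<in> carrier L \<Longrightarrow> ldiv x (x \<otimes> y) = y"
    and mult_ldiv: "x \<in> carrier L \<Longrightarrow> y \<in> carrier L \<Longrightarrow> x \<otimes> ldiv x y = y"
    and rdiv_mult: "x \<in> carrier L \<Longrightarrow> y \<in> carrier L \<Longrightarrow> rdiv (y \<otimes> x) x = y"
    and mult_rdiv: "x \<in> carrier L \<Longrightarrow> y \<in> carrier L \<Longrightarrow> rdiv y x \<otimes> x = y"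
begin

lemma l_cancel: "x \<in> carrier L \<Longrightarrow> a \<in> carrier L \<Longrightarrow> b \<in> carrier L \<Longrightarrow> x \<otimes> a = x \<otimes> b \<Longrightarrow> a = b"
  by (metis ldiv_mult)

lemma r_cancel: "x \<in> carrier L \<Longrightarrow> a \<in> carrier L \<Longrightarrow> b \<in> carrier L \<Longrightarrow> a \<otimes> x = b \<otimes> x \<Longrightarrow> a = b"
  by (metis rdiv_mult)

lemma ldiv_self: "x \<in> carrier L \<Longrightarrow> ldiv x x = \<one>"
  using ldiv_mult[OF _ one_closed, of x] r_one[of x] by simp

lemma rdiv_self: "x \<in> carrier L \<Longrightarrow> rdiv x x = \<one>"
  using rdiv_mult[OF _ one_closed, of x] l_one[of x] by simp

lemma subloopD:
  assumes "subloop N L"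
  shows "N \<subseteq> carrier L" "\<one> \<in> N" "a \<in> N \<Longrightarrow> b \<in> N \<Longrightarrow> a \<otimes> b \<in> N"
    "a \<in> N \<Longrightarrow> b \<in> N \<Longrightarrow> x \<in> carrier L \<Longrightarrow> a \<otimes> x = b \<Longrightarrow> x \<in> N"
  using assms unfolding subloop_def by blast+

text \<open>Element-wise form of Bruck's coset identities: the six quotients are the elements of \<open>N\<close>
  witnessing \<open>xN = Nx\<close>, \<open>(xN)y = x(Ny)\<close> and \<open>x(yN) = (xy)N\<close> in both directions.\<close>
definition inner_map_closed :: "'a set \<Rightarrow> bool" where
  "inner_map_closed N \<longleftrightarrow> (\<forall>x\<in>carrier L. \<forall>y\<in>carrier L. \<forall>m\<in>N.
     rdiv (x \<otimes> m) x \<in> N \<and> ldiv x (m \<otimes> x) \<in> N \<and>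
     rdiv (ldiv x ((x \<otimes> m) \<otimes> y)) y \<in> N \<and> ldiv x (rdiv (x \<otimes> (m \<otimes> y)) y) \<in> N \<and>
     ldiv (x \<otimes> y) (x \<otimes> (y \<otimes> m)) \<in> N \<and> ldiv y (ldiv x ((x \<otimes> y) \<otimes> m)) \<in> N)"

lemma inner_map_closed_if_normal:
  assumes nN: "normal_subloop N L"
  shows "inner_map_closed N"
  unfolding inner_map_closed_def
proof (intro ballI conjI)
  fix x y m assume x: "x \<in> carrier L" and y: "y \<in> carrier L" and m: "m \<in> N"
  have NC: "N \<subseteq> carrier L" using nN by (simp add: normal_subloop_def subloop_def)
  have c: "lcos L x N = rcos L N x" "rcos L (lcos L x N) y = lcos L x (rcos L N y)"
    "lcos L x (lcos L y N) = lcos L (x \<otimes> y) N"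
    using nN x y unfolding normal_subloop_def by blast+
  have "x \<otimes> m \<in> rcos L N x" using c m unfolding lcos_def by auto
  then show "rdiv (x \<otimes> m) x \<in> N" using x NC unfolding rcos_def by (auto simp: rdiv_mult)
  have "m \<otimes> x \<in> lcos L x N" using c m unfolding rcos_def by auto
  then show "ldiv x (m \<otimes> x) \<in> N" using x NC unfolding lcos_def by (auto simp: ldiv_mult)
  have "(x \<otimes> m) \<otimes> y \<in> lcos L x (rcos L N y)" using c m unfolding rcos_def lcos_def by blast
  then show "rdiv (ldiv x ((x \<otimes> m) \<otimes> y)) y \<in> N"
    using x y NC unfolding lcos_def rcos_def by (auto simp: rdiv_mult ldiv_mult m_closed)
  have "x \<otimes> (m \<otimes> y) \<in> rcos L (lcos L x N) y" using c m unfolding rcos_def lcos_def by blast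
  then show "ldiv x (rdiv (x \<otimes> (m \<otimes> y)) y) \<in> N"
    using x y NC unfolding lcos_def rcos_def by (auto simp: rdiv_mult ldiv_mult m_closed)
  have "x \<otimes> (y \<otimes> m) \<in> lcos L (x \<otimes> y) N" using c m unfolding lcos_def by blast
  then show "ldiv (x \<otimes> y) (x \<otimes> (y \<otimes> m)) \<in> N"
    using x y NC unfolding lcos_def by (auto simp: ldiv_mult m_closed)
  have "(x \<otimes> y) \<otimes> m \<in> lcos L x (lcos L y N)" using c m unfolding lcos_def by blast
  then show "ldiv y (ldiv x ((x \<otimes> y) \<otimes> m)) \<in> N"
    using x y NC unfolding lcos_def by (auto simp: ldiv_mult m_closed)
qed

lemma normal_if_inner_map_closed:
  assumes sl: "subloop N L" and ic: "inner_map_closed N"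
  shows "normal_subloop N L"
proof -
  have mc: "m \<in> carrier L" if "m \<in> N" for m using that subloopD(1)[OF sl] by blast
  have inN: "rdiv (x \<otimes> m) x \<in> N" "ldiv x (m \<otimes> x) \<in> N"
    "rdiv (ldiv x ((x \<otimes> m) \<otimes> y)) y \<in> N" "ldiv x (rdiv (x \<otimes> (m \<otimes> y)) y) \<in> N"
    "ldiv (x \<otimes> y) (x \<otimes> (y \<otimes> m)) \<in> N" "ldiv y (ldiv x ((x \<otimes> y) \<otimes> m)) \<in> N"
    if "x \<in> carrier L" "y \<in> carrier L" "m \<in> N" for x y m
    using ic that by (simp_all add: inner_map_closed_def)
  have "lcos L x N = rcos L N x \<and> rcos L (lcos L x N) y = lcos L x (rcos L N y) \<and>
      lcos L x (lcos L y N) = lcos L (x \<otimes> y) N"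
    if x: "x \<in> carrier L" and y: "y \<in> carrier L" for x y
  proof -
    have "(\<lambda>m. x \<otimes> m) ` N = (\<lambda>m. m \<otimes> x) ` N"
      by (rule image_eq_by_witnesses[where w = "\<lambda>m. rdiv (x \<otimes> m) x" and w' = "\<lambda>m. ldiv x (m \<otimes> x)"])
        (use x y inN mc in \<open>simp_all add: mult_ldiv mult_rdiv m_closed\<close>)
    moreover have "(\<lambda>m. (x \<otimes> m) \<otimes> y) ` N = (\<lambda>m. x \<otimes> (m \<otimes> y)) ` N"
      by (rule image_eq_by_witnesses[where w = "\<lambda>m. rdiv (ldiv x ((x \<otimes> m) \<otimes> y)) y"
            and w' = "\<lambda>m. ldiv x (rdiv (x \<otimes> (m \<otimes> y)) y)"])
        (use x y inN mc in \<open>simp_all add: mult_ldiv mult_rdiv m_closed ldiv_closed rdiv_closed\<close>)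
    moreover have "(\<lambda>m. x \<otimes> (y \<otimes> m)) ` N = (\<lambda>m. (x \<otimes> y) \<otimes> m) ` N"
      by (rule image_eq_by_witnesses[where w = "\<lambda>m. ldiv (x \<otimes> y) (x \<otimes> (y \<otimes> m))"
            and w' = "\<lambda>m. ldiv y (ldiv x ((x \<otimes> y) \<otimes> m))"])
        (use x y inN mc in \<open>simp_all add: mult_ldiv m_closed ldiv_closed\<close>)
    ultimately show ?thesis unfolding lcos_def rcos_def image_image by blast
  qed
  then show ?thesis using sl unfolding normal_subloop_def by blast
qed

lemma normal_subloop_iff_inner_map_closed:
  "normal_subloop N L \<longleftrightarrow> subloop N L \<and> inner_map_closed N"
proof
  assume nN: "normal_subloop N L"
  then have "subloop N L" unfolding normal_subloop_def by (rule conjunct1)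
  with inner_map_closed_if_normal[OF nN] show "subloop N L \<and> inner_map_closed N" by blast
qed (blast intro: normal_if_inner_map_closed)

lemma normal_subloop_Inter:
  assumes ne: "\<M> \<noteq> {}" and nM: "\<And>M. M \<in> \<M> \<Longrightarrow> normal_subloop M L"
  shows "normal_subloop (\<Inter>\<M>) L"
proof -
  have sl: "\<And>M. M \<in> \<M> \<Longrightarrow> subloop M L" and ic: "\<And>M. M \<in> \<M> \<Longrightarrow> inner_map_closed M"
    using nM by (simp_all add: normal_subloop_iff_inner_map_closed)
  have "subloop (\<Inter>\<M>) L"
    unfolding subloop_def
  proof (intro conjI ballI impI)
    show "\<Inter>\<M> \<subseteq> carrier L" using ne sl subloopD(1) by blast
    show "\<one> \<in> \<Inter>\<M>" using sl subloopD(2) by blast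
    show "a \<otimes> b \<in> \<Inter>\<M>" if "a \<in> \<Inter>\<M>" "b \<in> \<Inter>\<M>" for a b
      using that sl subloopD(3) by blast
    show "x \<in> \<Inter>\<M>" if "a \<in> \<Inter>\<M>" "b \<in> \<Inter>\<M>" "x \<in> carrier L" "a \<otimes> x = b" for a b x
      using that sl subloopD(4) by blast
    show "x \<in> \<Inter>\<M>" if "a \<in> \<Inter>\<M>" "b \<in> \<Inter>\<M>" "x \<in> carrier L" "x \<otimes> a = b" for a b x
      using that sl unfolding subloop_def by blast
  qed
  moreover have "inner_map_closed (\<Inter>\<M>)"
    using ic unfolding inner_map_closed_def by blast
  ultimately show ?thesis by (simp add: normal_subloop_iff_inner_map_closed)
qed

definition centre_defects :: "'a \<Rightarrow> 'a \<Rightarrow> 'a \<Rightarrow> 'a set" where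
  "centre_defects a x y = {ldiv (a \<otimes> x) (x \<otimes> a), ldiv ((a \<otimes> x) \<otimes> y) (a \<otimes> (x \<otimes> y)),
     ldiv ((x \<otimes> a) \<otimes> y) (x \<otimes> (a \<otimes> y)), ldiv ((x \<otimes> y) \<otimes> a) (x \<otimes> (y \<otimes> a))}"

context
  fixes N assumes normal: "normal_subloop N L"
begin

lemma normal_subloop_subloop: "subloop N L"
  using normal unfolding normal_subloop_def by blast

lemma normal_subset_carrier: "N \<subseteq> carrier L"
  using subloopD(1)[OF normal_subloop_subloop] .

lemma normal_cosets:
  "x \<in> carrier L \<Longrightarrow> y \<in> carrier L \<Longrightarrow> lcos L x N = rcos L N x \<and>
     rcos L (lcos L x N) y = lcos L x (rcos L N y) \<and> lcos L x (lcos L y N) = lcos L (x \<otimes> y) N"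
  using normal unfolding normal_subloop_def by blast

lemma lcos_lcos: "x \<in> carrier L \<Longrightarrow> y \<in> carrier L \<Longrightarrow> lcos L x (lcos L y N) = lcos L (x \<otimes> y) N"
  using normal_cosets by blast

lemma rcos_lcos:
  assumes x: "x \<in> carrier L" and y: "y \<in> carrier L"
  shows "rcos L (lcos L x N) y = lcos L x (lcos L y N)"
proof -
  have "rcos L (lcos L x N) y = lcos L x (rcos L N y)" using normal_cosets[OF x y] by blast
  moreover have "rcos L N y = lcos L y N" using normal_cosets[OF y y] by blast
  ultimately show ?thesis by simp
qed

lemma lcos_subset_carrier: "x \<in> carrier L \<Longrightarrow> lcos L x N \<subseteq> carrier L"
  using normal_subset_carrier unfolding lcos_def by (auto simp: m_closed)

lemma lcos_self_mem: assumes x: "x \<in> carrier L" shows "x \<in> lcos L x N"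
proof -
  have "\<one> \<in> N" using subloopD(2)[OF normal_subloop_subloop] .
  then show ?thesis unfolding lcos_def by (rule image_eqI[rotated]) (simp add: r_one x)
qed

lemma lcos_mem_eq: assumes m: "m \<in> N" shows "lcos L m N = N"
proof (intro equalityI subsetI)
  fix z assume "z \<in> lcos L m N"
  then show "z \<in> N" using m subloopD(3)[OF normal_subloop_subloop] unfolding lcos_def by blast
next
  fix z assume z: "z \<in> N"
  have mc: "m \<in> carrier L" "z \<in> carrier L" using m z normal_subset_carrier by auto
  have "ldiv m z \<in> N"
    using subloopD(4)[OF normal_subloop_subloop m z] mc by (simp add: mult_ldiv ldiv_closed)
  then show "z \<in> lcos L m N" unfolding lcos_def using mc by (metis image_eqI mult_ldiv)
qed

lemma lcos_eq_iff:
  assumes x: "x \<in> carrier L" and y: "y \<in> carrier L"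
  shows "lcos L x N = lcos L y N \<longleftrightarrow> ldiv x y \<in> N"
proof
  assume "lcos L x N = lcos L y N"
  then have "y \<in> lcos L x N" using lcos_self_mem[OF y] by simp
  then show "ldiv x y \<in> N"
    using x normal_subset_carrier unfolding lcos_def by (auto simp: ldiv_mult)
next
  assume m: "ldiv x y \<in> N"
  have "lcos L y N = lcos L x (lcos L (ldiv x y) N)"
    using x y by (simp add: lcos_lcos ldiv_closed mult_ldiv)
  then show "lcos L x N = lcos L y N" by (simp add: lcos_mem_eq[OF m])
qed

lemma quot_mult_lcos:
  assumes x: "x \<in> carrier L" and y: "y \<in> carrier L"
  shows "lcos L x N \<otimes>\<^bsub>quot_loop L N\<^esub> lcos L y N = lcos L (x \<otimes> y) N"
proof -
  have "a \<otimes> b \<in> lcos L (x \<otimes> y) N" if a: "a \<in> lcos L x N" and b: "b \<in> lcos L y N" for a b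
  proof -
    have ac: "a \<in> carrier L" using a lcos_subset_carrier[OF x] by blast
    have "a \<otimes> y \<in> rcos L (lcos L x N) y" using a unfolding rcos_def by blast
    then have "a \<otimes> y \<in> lcos L (x \<otimes> y) N" using x y by (simp add: rcos_lcos lcos_lcos)
    then obtain m where "m \<in> N" "a \<otimes> y = (x \<otimes> y) \<otimes> m" unfolding lcos_def by auto
    then have "ldiv (x \<otimes> y) (a \<otimes> y) \<in> N"
      using x y normal_subset_carrier by (auto simp: ldiv_mult m_closed)
    then have "lcos L (a \<otimes> y) N = lcos L (x \<otimes> y) N"
      using lcos_eq_iff[of "x \<otimes> y" "a \<otimes> y"] x y ac by (simp add: m_closed)
    moreover have "a \<otimes> b \<in> lcos L a (lcos L y N)" using b unfolding lcos_def by blast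
    ultimately show ?thesis using ac y by (simp add: lcos_lcos)
  qed
  moreover have "z \<in> {a \<otimes> b |a b. a \<in> lcos L x N \<and> b \<in> lcos L y N}"
    if "z \<in> lcos L (x \<otimes> y) N" for z
  proof -
    have "z \<in> lcos L x (lcos L y N)" using that x y by (simp add: lcos_lcos)
    then show ?thesis using lcos_self_mem[OF x] unfolding lcos_def by blast
  qed
  ultimately show ?thesis unfolding quot_loop_def by auto
qed

lemma lcos_in_centre_iff:
  assumes a: "a \<in> carrier L"
  shows "lcos L a N \<in> loop_centre (quot_loop L N) \<longleftrightarrow>
    (\<forall>x\<in>carrier L. \<forall>y\<in>carrier L. centre_defects a x y \<subseteq> N)"
proof -
  have "carrier (quot_loop L N) = (\<lambda>x. lcos L x N) ` carrier L" by (simp add: quot_loop_def)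
  then have "lcos L a N \<in> loop_centre (quot_loop L N) \<longleftrightarrow>
    (\<forall>x\<in>carrier L. \<forall>y\<in>carrier L.
      lcos L (a \<otimes> x) N = lcos L (x \<otimes> a) N \<and>
      lcos L ((a \<otimes> x) \<otimes> y) N = lcos L (a \<otimes> (x \<otimes> y)) N \<and>
      lcos L ((x \<otimes> a) \<otimes> y) N = lcos L (x \<otimes> (a \<otimes> y)) N \<and>
      lcos L ((x \<otimes> y) \<otimes> a) N = lcos L (x \<otimes> (y \<otimes> a)) N)"
    unfolding loop_centre_def using a by (auto simp: quot_mult_lcos m_closed)
  also have "\<dots> \<longleftrightarrow> (\<forall>x\<in>carrier L. \<forall>y\<in>carrier L. centre_defects a x y \<subseteq> N)"
    using a by (simp add: lcos_eq_iff m_closed centre_defects_def)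
  finally show ?thesis .
qed

lemma left_mult_image: "a \<in> carrier L \<Longrightarrow> (\<lambda>x. a \<otimes> x) ` carrier L = carrier L"
proof (intro equalityI subsetI)
  fix z assume "a \<in> carrier L" "z \<in> (\<lambda>x. a \<otimes> x) ` carrier L"
  then show "z \<in> carrier L" by (auto simp: m_closed)
next
  fix z assume a: "a \<in> carrier L" and z: "z \<in> carrier L"
  then have "z = a \<otimes> ldiv a z" by (simp add: mult_ldiv)
  then show "z \<in> (\<lambda>x. a \<otimes> x) ` carrier L" using a z ldiv_closed by blast
qed

lemma bij_betw_quot_left_mult:
  assumes A: "A \<in> carrier (quot_loop L N)"
  shows "bij_betw (\<lambda>U. A \<otimes>\<^bsub>quot_loop L N\<^esub> U) (carrier (quot_loop L N)) (carrier (quot_loop L N))"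
proof -
  have car: "carrier (quot_loop L N) = (\<lambda>x. lcos L x N) ` carrier L" by (simp add: quot_loop_def)
  obtain a where a: "a \<in> carrier L" and A_eq: "A = lcos L a N" using A car by auto
  have left: "A \<otimes>\<^bsub>quot_loop L N\<^esub> lcos L x N = (\<lambda>z. a \<otimes> z) ` lcos L x N"
    if x: "x \<in> carrier L" for x
  proof -
    have "A \<otimes>\<^bsub>quot_loop L N\<^esub> lcos L x N = lcos L a (lcos L x N)"
      using a x by (simp add: A_eq quot_mult_lcos lcos_lcos)
    then show ?thesis unfolding lcos_def[of L a] .
  qed
  have inj: "inj_on (\<lambda>z. a \<otimes> z) (carrier L)"
    using a l_cancel by (auto intro: inj_onI)
  have inj_A: "inj_on (\<lambda>U. A \<otimes>\<^bsub>quot_loop L N\<^esub> U) (carrier (quot_loop L N))"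
  proof (rule inj_onI)
    fix U V assume "U \<in> carrier (quot_loop L N)" "V \<in> carrier (quot_loop L N)"
      and eq: "A \<otimes>\<^bsub>quot_loop L N\<^esub> U = A \<otimes>\<^bsub>quot_loop L N\<^esub> V"
    then obtain x y where x: "x \<in> carrier L" "U = lcos L x N" and y: "y \<in> carrier L" "V = lcos L y N"
      unfolding car by blast
    have "(\<lambda>z. a \<otimes> z) ` lcos L x N = (\<lambda>z. a \<otimes> z) ` lcos L y N"
      using eq x y left by simp
    then show "U = V"
      using inj_on_image_eq_iff[OF inj lcos_subset_carrier[OF x(1)] lcos_subset_carrier[OF y(1)]] x y
      by simp
  qed
  have "(\<lambda>U. A \<otimes>\<^bsub>quot_loop L N\<^esub> U) ` carrier (quot_loop L N) =
      (\<lambda>x. lcos L (a \<otimes> x) N) ` carrier L"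
    unfolding car image_image using a by (intro image_cong) (simp_all add: A_eq quot_mult_lcos)
  also have "\<dots> = (\<lambda>x. lcos L x N) ` ((\<lambda>x. a \<otimes> x) ` carrier L)" by (simp only: image_image)
  also have "\<dots> = carrier (quot_loop L N)" by (simp only: left_mult_image[OF a] car)
  finally show ?thesis using inj_A by (simp add: bij_betw_def)
qed

lemma lcos_mult_mem_left:
  assumes a: "a \<in> N" and x: "x \<in> carrier L"
  shows "lcos L (a \<otimes> x) N = lcos L x N"
proof -
  have ac: "a \<in> carrier L" using a normal_subset_carrier by blast
  have "lcos L (a \<otimes> x) N = rcos L (lcos L a N) x" using ac x by (simp add: rcos_lcos lcos_lcos)
  also have "\<dots> = rcos L N x" by (simp add: lcos_mem_eq a)
  also have "\<dots> = lcos L x N" using conjunct1[OF normal_cosets[OF x x]] by simp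
  finally show ?thesis .
qed

lemma lcos_mult_mem_right:
  assumes a: "a \<in> N" and x: "x \<in> carrier L"
  shows "lcos L (x \<otimes> a) N = lcos L x N"
  using a x normal_subset_carrier by (auto simp: lcos_lcos[symmetric] lcos_mem_eq)

lemma lcos_mem_in_centre:
  assumes a: "a \<in> N"
  shows "lcos L a N \<in> loop_centre (quot_loop L N)"
proof -
  have car: "carrier (quot_loop L N) = (\<lambda>x. lcos L x N) ` carrier L" by (simp add: quot_loop_def)
  have ac: "a \<in> carrier L" using a normal_subset_carrier by blast
  have unit: "lcos L a N \<otimes>\<^bsub>quot_loop L N\<^esub> U = U \<and> U \<otimes>\<^bsub>quot_loop L N\<^esub> lcos L a N = U"
    if "U \<in> carrier (quot_loop L N)" for U
    using that a ac
    by (auto simp: car quot_mult_lcos lcos_mult_mem_left lcos_mult_mem_right)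
  have closed: "U \<otimes>\<^bsub>quot_loop L N\<^esub> V \<in> carrier (quot_loop L N)"
    if "U \<in> carrier (quot_loop L N)" "V \<in> carrier (quot_loop L N)" for U V
    using that by (auto simp: car quot_mult_lcos m_closed)
  show ?thesis unfolding loop_centre_def using ac car unit closed by auto
qed

lemma self_in_loop_comm_family:
  "N \<in> {M. M \<subseteq> N \<and> subloop M L \<and> normal_subloop M L \<and>
      (\<lambda>x. lcos L x M) ` N \<subseteq> loop_centre (quot_loop L N)}"
  using normal normal_subloop_subloop lcos_mem_in_centre by blast

lemma loop_comm_subset: "loop_comm N L \<subseteq> N"
  unfolding loop_comm_def using self_in_loop_comm_family by blast

lemma normal_subloop_loop_comm: "normal_subloop (loop_comm N L) L"
  unfolding loop_comm_def using self_in_loop_comm_family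
  by (intro normal_subloop_Inter) blast+

end

lemma normal_subloop_carrier: "normal_subloop (carrier L) L"
  by (simp add: normal_subloop_iff_inner_map_closed subloop_def inner_map_closed_def
      one_closed m_closed ldiv_closed rdiv_closed)

lemma centre_defects_subset_loop_comm:
  assumes "N \<subseteq> carrier L" "a \<in> N" "x \<in> carrier L" "y \<in> carrier L"
  shows "centre_defects a x y \<subseteq> loop_comm N L"
  unfolding loop_comm_def
proof (rule Inter_greatest)
  fix M assume "M \<in> {M. M \<subseteq> N \<and> subloop M L \<and> normal_subloop M L \<and>
      (\<lambda>x. lcos L x M) ` N \<subseteq> loop_centre (quot_loop L M)}"
  then have M: "normal_subloop M L" and "lcos L a M \<in> loop_centre (quot_loop L M)"
    using assms(2) by blast+
  then show "centre_defects a x y \<subseteq> M"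
    using lcos_in_centre_iff[OF M] assms by blast
qed

end

section \<open>Homomorphisms of loops\<close>

definition quot_lift :: "'a monoid \<Rightarrow> 'a set \<Rightarrow> ('a \<Rightarrow> 'b) \<Rightarrow> 'a set \<Rightarrow> 'b" where
  "quot_lift L N h U = h (SOME x. x \<in> carrier L \<and> U = lcos L x N)"

definition semiconj_on :: "'a set \<Rightarrow> ('a \<Rightarrow> 'b) \<Rightarrow> ('a \<Rightarrow> 'a) \<Rightarrow> ('b \<Rightarrow> 'b) \<Rightarrow> bool" where
  "semiconj_on S p g f \<longleftrightarrow> (\<forall>x\<in>S. p (g x) = f (p x))"

locale loop_hom = L: division_loop L ldiv rdiv + Q: division_loop Q qldiv qrdiv
  for L :: "'a monoid" (structure) and ldiv rdiv and Q :: "'b monoid" and qldiv qrdiv +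
  fixes h :: "'a \<Rightarrow> 'b"
  assumes hom_closed: "x \<in> carrier L \<Longrightarrow> h x \<in> carrier Q"
    and hom_mult: "x \<in> carrier L \<Longrightarrow> y \<in> carrier L \<Longrightarrow> h (x \<otimes> y) = h x \<otimes>\<^bsub>Q\<^esub> h y"
begin

lemma hom_one: "h \<one> = \<one>\<^bsub>Q\<^esub>"
proof -
  have "h \<one> \<otimes>\<^bsub>Q\<^esub> h \<one> = \<one>\<^bsub>Q\<^esub> \<otimes>\<^bsub>Q\<^esub> h \<one>"
    using hom_mult[of \<one> \<one>] L.one_closed L.l_one hom_closed Q.l_one by simp
  then show ?thesis using L.one_closed hom_closed Q.one_closed by (blast intro: Q.r_cancel)
qed

lemma hom_ldiv: "x \<in> carrier L \<Longrightarrow> y \<in> carrier L \<Longrightarrow> h (ldiv x y) = qldiv (h x) (h y)"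
  by (metis L.ldiv_closed L.mult_ldiv Q.ldiv_mult hom_closed hom_mult)

lemma hom_rdiv: "x \<in> carrier L \<Longrightarrow> y \<in> carrier L \<Longrightarrow> h (rdiv x y) = qrdiv (h x) (h y)"
  by (metis L.rdiv_closed L.mult_rdiv Q.rdiv_mult hom_closed hom_mult)

lemma normal_subloop_kernel: "normal_subloop (kernel L Q h) L"
proof -
  have "subloop (kernel L Q h) L"
    unfolding subloop_def kernel_def
    using L.one_closed hom_one
    by (auto simp: L.m_closed hom_mult Q.l_one Q.r_one Q.one_closed
        intro: Q.l_cancel[OF Q.one_closed] Q.r_cancel[OF Q.one_closed] hom_closed)
  moreover have "L.inner_map_closed (kernel L Q h)"
    unfolding L.inner_map_closed_def kernel_def
    by (simp add: L.m_closed L.ldiv_closed L.rdiv_closed hom_mult hom_ldiv hom_rdiv hom_closed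
        Q.m_closed Q.ldiv_closed Q.rdiv_closed Q.l_one Q.r_one Q.ldiv_mult Q.rdiv_mult
        Q.ldiv_self Q.rdiv_self)
  ultimately show ?thesis by (simp add: L.normal_subloop_iff_inner_map_closed)
qed

lemma loop_comm_subset_kernel:
  assumes N: "normal_subloop N L"
    and closed: "\<And>a x y. a \<in> N \<Longrightarrow> x \<in> carrier L \<Longrightarrow> y \<in> carrier L \<Longrightarrow> L.centre_defects a x y \<subseteq> N"
    and central: "h ` N \<subseteq> loop_centre Q"
  shows "loop_comm N L \<subseteq> kernel L Q h"
proof -
  \<comment> \<open>\<open>N \<inter> kernel L Q h\<close> is one of the subloops whose intersection defines \<open>[N, L]\<close>.\<close>
  let ?M = "N \<inter> kernel L Q h"
  have NC: "N \<subseteq> carrier L" using L.normal_subset_carrier[OF N] .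
  have nM: "normal_subloop ?M L"
    using L.normal_subloop_Inter[of "{N, kernel L Q h}"] N normal_subloop_kernel by auto
  have "L.centre_defects a x y \<subseteq> kernel L Q h"
    if a: "a \<in> N" and x: "x \<in> carrier L" and y: "y \<in> carrier L" for a x y
  proof -
    have ac: "a \<in> carrier L" using a NC by blast
    have "h a \<in> loop_centre Q" using a central by blast
    then have "h a \<otimes>\<^bsub>Q\<^esub> h x = h x \<otimes>\<^bsub>Q\<^esub> h a"
      "(h a \<otimes>\<^bsub>Q\<^esub> h x) \<otimes>\<^bsub>Q\<^esub> h y = h a \<otimes>\<^bsub>Q\<^esub> (h x \<otimes>\<^bsub>Q\<^esub> h y)"
      "(h x \<otimes>\<^bsub>Q\<^esub> h a) \<otimes>\<^bsub>Q\<^esub> h y = h x \<otimes>\<^bsub>Q\<^esub> (h a \<otimes>\<^bsub>Q\<^esub> h y)"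
      "(h x \<otimes>\<^bsub>Q\<^esub> h y) \<otimes>\<^bsub>Q\<^esub> h a = h x \<otimes>\<^bsub>Q\<^esub> (h y \<otimes>\<^bsub>Q\<^esub> h a)"
      using x y hom_closed unfolding loop_centre_def by blast+
    then show ?thesis
      using ac x y unfolding L.centre_defects_def kernel_def
      by (simp add: L.m_closed L.ldiv_closed hom_mult hom_ldiv Q.ldiv_self Q.m_closed hom_closed)
  qed
  then have "L.centre_defects a x y \<subseteq> ?M"
    if "a \<in> N" "x \<in> carrier L" "y \<in> carrier L" for a x y
    using that closed by blast
  then have "(\<lambda>a. lcos L a ?M) ` N \<subseteq> loop_centre (quot_loop L ?M)"
    using L.lcos_in_centre_iff[OF nM] NC by blast
  then show ?thesis
    unfolding loop_comm_def using nM L.normal_subloop_subloop[OF nM] by blast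
qed

lemma quot_lift_lcos:
  assumes N: "normal_subloop N L" and ker: "N \<subseteq> kernel L Q h" and x: "x \<in> carrier L"
  shows "quot_lift L N h (lcos L x N) = h x"
proof -
  define y where "y = (SOME y. y \<in> carrier L \<and> lcos L x N = lcos L y N)"
  have "y \<in> carrier L \<and> lcos L x N = lcos L y N"
    unfolding y_def by (rule someI[of _ x]) (simp add: x)
  then have y: "y \<in> carrier L" and "ldiv y x \<in> N" using L.lcos_eq_iff[OF N _ x] by auto
  then have "qldiv (h y) (h x) = \<one>\<^bsub>Q\<^esub>" using ker x by (auto simp: kernel_def hom_ldiv)
  then have "h x = h y"
    using Q.mult_ldiv[of "h y" "h x"] Q.r_one x y hom_closed by metis
  then show ?thesis by (simp add: quot_lift_def y_def)
qed

lemma semiconj_quot_left_mult: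
  assumes N: "normal_subloop N L" and ker: "N \<subseteq> kernel L Q h" and a: "a \<in> carrier L"
  shows "semiconj_on (carrier (quot_loop L N)) (quot_lift L N h)
    (\<lambda>U\<in>carrier (quot_loop L N). lcos L a N \<otimes>\<^bsub>quot_loop L N\<^esub> U) (\<lambda>q. h a \<otimes>\<^bsub>Q\<^esub> q)"
  unfolding semiconj_on_def
proof
  fix U assume U: "U \<in> carrier (quot_loop L N)"
  then obtain x where x: "x \<in> carrier L" "U = lcos L x N" by (auto simp: quot_loop_def)
  with U show "quot_lift L N h ((\<lambda>U\<in>carrier (quot_loop L N). lcos L a N \<otimes>\<^bsub>quot_loop L N\<^esub> U) U) =
      h a \<otimes>\<^bsub>Q\<^esub> quot_lift L N h U"
    using a by (simp add: L.quot_mult_lcos[OF N] quot_lift_lcos[OF N ker] L.m_closed hom_mult)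
qed

end

section \<open>Semiconjugacy of permutations\<close>

lemma semiconj_on_compose:
  assumes "h \<in> S \<rightarrow> S" "semiconj_on S p g f" "semiconj_on S p h f'"
  shows "semiconj_on S p (compose S g h) (f \<circ> f')"
  unfolding semiconj_on_def
proof
  fix x assume x: "x \<in> S"
  then have "h x \<in> S" using assms(1) by blast
  then show "p (compose S g h x) = (f \<circ> f') (p x)"
    using assms(2,3) x unfolding semiconj_on_def compose_def by simp
qed

lemma semiconj_on_inv:
  assumes g: "g \<in> Bij S" and sg: "semiconj_on S p g f" and left_inv: "\<And>q. f' (f q) = q"
  shows "semiconj_on S p (inv\<^bsub>BijGroup S\<^esub> g) f'"
  unfolding semiconj_on_def
proof
  fix x assume x: "x \<in> S"
  have "g ` S = S" using g by (simp add: Bij_def bij_betw_def)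
  then have "g (inv_into S g x) = x" using x by (simp add: f_inv_into_f)
  moreover have "inv_into S g x \<in> S" using g x by (rule Bij_inv_into_mem)
  ultimately have "p x = f (p (inv_into S g x))" using sg unfolding semiconj_on_def by metis
  then show "p ((inv\<^bsub>BijGroup S\<^esub> g) x) = f' (p x)" using g x by (simp add: inv_BijGroup left_inv)
qed

lemma semiconj_on_commutator:
  assumes G: "G = BijGroup S\<lparr>carrier := H\<rparr>" and H: "subgroup H (BijGroup S)"
    and g: "g \<in> H" and h: "h \<in> H"
    and sg: "semiconj_on S p g f" and sh: "semiconj_on S p h f'"
    and inv_f: "\<And>q. fi (f q) = q" and inv_f': "\<And>q. fi' (f' q) = q"
  shows "semiconj_on S p (g \<otimes>\<^bsub>G\<^esub> h \<otimes>\<^bsub>G\<^esub> inv\<^bsub>G\<^esub> g \<otimes>\<^bsub>G\<^esub> inv\<^bsub>G\<^esub> h) (f \<circ> f' \<circ> fi \<circ> fi')"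
proof -
  interpret B: group "BijGroup S" by (rule group_BijGroup)
  have gB: "g \<in> Bij S" and hB: "h \<in> Bij S"
    using g h subgroup.subset[OF H] by (auto simp: BijGroup_def)
  have ig: "inv\<^bsub>BijGroup S\<^esub> g \<in> Bij S" and ih: "inv\<^bsub>BijGroup S\<^esub> h \<in> Bij S"
    using gB hB B.inv_closed by (auto simp: BijGroup_def)
  have sig: "semiconj_on S p (inv\<^bsub>BijGroup S\<^esub> g) fi"
    and sih: "semiconj_on S p (inv\<^bsub>BijGroup S\<^esub> h) fi'"
    using semiconj_on_inv gB hB sg sh inv_f inv_f' by blast+
  have "semiconj_on S p (compose S g h) (f \<circ> f')"
    by (rule semiconj_on_compose[OF Bij_imp_funcset[OF hB] sg sh])
  then have "semiconj_on S p (compose S (compose S g h) (inv\<^bsub>BijGroup S\<^esub> g)) (f \<circ> f' \<circ> fi)"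
    by (rule semiconj_on_compose[OF Bij_imp_funcset[OF ig] _ sig])
  then have "semiconj_on S p
      (compose S (compose S (compose S g h) (inv\<^bsub>BijGroup S\<^esub> g)) (inv\<^bsub>BijGroup S\<^esub> h))
      (f \<circ> f' \<circ> fi \<circ> fi')"
    by (rule semiconj_on_compose[OF Bij_imp_funcset[OF ih] _ sih])
  moreover have "x \<otimes>\<^bsub>G\<^esub> y = compose S x y" if "x \<in> Bij S" "y \<in> Bij S" for x y
    using that by (simp add: G BijGroup_def)
  moreover have "inv\<^bsub>G\<^esub> x = inv\<^bsub>BijGroup S\<^esub> x" if "x \<in> H" for x
    using B.m_inv_consistent[OF H that] by (simp add: G)
  ultimately show ?thesis using g h gB hB ig ih by (simp add: compose_Bij)
qed

lemma semiconj_on_moves_point: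
  "semiconj_on S p g f \<Longrightarrow> x \<in> S \<Longrightarrow> f (p x) \<noteq> p x \<Longrightarrow> g \<noteq> (\<lambda>x\<in>S. x)"
  by (auto simp: semiconj_on_def)

lemma subgroup_LMlt:
  assumes "\<And>a. a \<in> carrier L \<Longrightarrow> bij_betw (\<lambda>x. a \<otimes>\<^bsub>L\<^esub> x) (carrier L) (carrier L)"
  shows "subgroup (carrier (LMlt L)) (BijGroup (carrier L))"
proof -
  have "(\<lambda>a. restrict (\<lambda>x. a \<otimes>\<^bsub>L\<^esub> x) (carrier L)) ` carrier L \<subseteq> carrier (BijGroup (carrier L))"
    using assms by (auto simp: BijGroup_def Bij_def cong: bij_betw_cong)
  then show ?thesis unfolding LMlt_def by (simp add: group.generate_is_subgroup[OF group_BijGroup])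
qed

lemma group_LMlt:
  assumes "\<And>a. a \<in> carrier L \<Longrightarrow> bij_betw (\<lambda>x. a \<otimes>\<^bsub>L\<^esub> x) (carrier L) (carrier L)"
  shows "group (LMlt L)"
  using subgroup.subgroup_is_group[OF subgroup_LMlt[OF assms] group_BijGroup]
  by (simp add: LMlt_def)

lemma left_mult_in_LMlt:
  "a \<in> carrier L \<Longrightarrow> restrict (\<lambda>x. a \<otimes>\<^bsub>L\<^esub> x) (carrier L) \<in> carrier (LMlt L)"
  by (simp add: LMlt_def generate.incl)

lemma LMlt_eq: "LMlt L = BijGroup (carrier L)\<lparr>carrier := carrier (LMlt L)\<rparr>"
  by (simp add: LMlt_def)

lemma one_LMlt: "\<one>\<^bsub>LMlt L\<^esub> = (\<lambda>x\<in>carrier L. x)"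
  by (simp add: LMlt_def BijGroup_def)

primrec left_comm :: "('a, 'b) monoid_scheme \<Rightarrow> (nat \<Rightarrow> 'a) \<Rightarrow> nat \<Rightarrow> 'a" where
  "left_comm G g 0 = g 0"
| "left_comm G g (Suc k) =
     g (Suc k) \<otimes>\<^bsub>G\<^esub> left_comm G g k \<otimes>\<^bsub>G\<^esub> inv\<^bsub>G\<^esub> g (Suc k) \<otimes>\<^bsub>G\<^esub> inv\<^bsub>G\<^esub> left_comm G g k"

lemma left_comm_in_gamma_aux:
  "(\<And>i. i \<le> k \<Longrightarrow> g i \<in> carrier G) \<Longrightarrow> left_comm G g k \<in> gamma_aux G k"
  by (induction k) (auto simp: grp_comm_def intro!: generate.incl)

lemma (in group) left_comm_closed:
  "(\<And>i. i \<le> k \<Longrightarrow> g i \<in> carrier G) \<Longrightarrow> left_comm G g k \<in> carrier G"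
  by (induction k) auto

lemma lclass_eq_iff: "lclass s = lclass t \<longleftrightarrow> leq s t"
proof
  assume "lclass s = lclass t"
  then show "leq s t" by (metis lclass_def leq.refl mem_Collect_eq)
next
  assume "leq s t"
  then show "lclass s = lclass t" unfolding lclass_def by (auto intro: leq.trans leq.sym)
qed

lemma leq_some_lclass: "leq t (SOME u. u \<in> lclass t)"
proof -
  have "t \<in> lclass t" by (simp add: lclass_def leq.refl)
  then have "(SOME u. u \<in> lclass t) \<in> lclass t" by (rule someI)
  then show ?thesis by (simp add: lclass_def)
qed

definition free_ldiv :: "lterm set \<Rightarrow> lterm set \<Rightarrow> lterm set" where
  "free_ldiv A B = lclass (LDiv (SOME s. s \<in> A) (SOME t. t \<in> B))"

definition free_rdiv :: "lterm set \<Rightarrow> lterm set \<Rightarrow> lterm set" where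
  "free_rdiv A B = lclass (RDiv (SOME s. s \<in> A) (SOME t. t \<in> B))"

lemma free_mult_lclass: "lclass s \<otimes>\<^bsub>free_loop n\<^esub> lclass t = lclass (Mul s t)"
  unfolding free_loop_def by (simp add: lclass_eq_iff leq.sym leq.cMul leq_some_lclass)

lemma free_ldiv_lclass: "free_ldiv (lclass s) (lclass t) = lclass (LDiv s t)"
  unfolding free_ldiv_def by (simp add: lclass_eq_iff leq.sym leq.cLDiv leq_some_lclass)

lemma free_rdiv_lclass: "free_rdiv (lclass s) (lclass t) = lclass (RDiv s t)"
  unfolding free_rdiv_def by (simp add: lclass_eq_iff leq.sym leq.cRDiv leq_some_lclass)

lemma one_free_loop: "\<one>\<^bsub>free_loop n\<^esub> = lclass E"
  by (simp add: free_loop_def)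

lemma carrier_free_loop: "carrier (free_loop n) = lclass ` {t. gens_below n t}"
  by (simp add: free_loop_def)

lemma lclass_in_free_loop: "gens_below n t \<Longrightarrow> lclass t \<in> carrier (free_loop n)"
  by (simp add: carrier_free_loop)

lemma free_loop_cases:
  "x \<in> carrier (free_loop n) \<Longrightarrow> (\<And>t. gens_below n t \<Longrightarrow> x = lclass t \<Longrightarrow> P) \<Longrightarrow> P"
  unfolding carrier_free_loop by blast

interpretation free: division_loop "free_loop n" free_ldiv free_rdiv
  by unfold_locales
    ((elim free_loop_cases)?; simp add: lclass_in_free_loop one_free_loop free_mult_lclass
      free_ldiv_lclass free_rdiv_lclass lclass_eq_iff leq.idl leq.idr leq.ld1 leq.ld2 leq.rd1 leq.rd2)+

section \<open>A test loop of nilpotency class two\<close>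

definition tail_prod :: "nat \<Rightarrow> nat \<Rightarrow> (nat \<Rightarrow> int) \<Rightarrow> int" where
  "tail_prod m k b = (\<Prod>j\<in>{k..m}. b j)"

lemma tail_prod_zero: "k \<le> m \<Longrightarrow> tail_prod m k (\<lambda>j. 0) = 0"
  by (simp add: tail_prod_def)

lemma tail_prod_empty: "tail_prod m (Suc m) b = 1"
  by (simp add: tail_prod_def)

lemma tail_prod_cong:
  "(\<And>j. k \<le> j \<Longrightarrow> b j = c j) \<Longrightarrow> tail_prod m k b = tail_prod m k c"
  unfolding tail_prod_def by (rule prod.cong) auto

lemma tail_prod_diff_head:
  assumes "k \<le> m"
  shows "tail_prod m k (\<lambda>j. b j - (if j = k then 1 else 0)) = tail_prod m k b - tail_prod m (Suc k) b"
proof -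
  have "{k..m} = insert k {Suc k..m}" using assms by auto
  moreover have "tail_prod m (Suc k) (\<lambda>j. b j - (if j = k then 1 else 0)) = tail_prod m (Suc k) b"
    by (rule tail_prod_cong) simp
  ultimately show ?thesis unfolding tail_prod_def by (simp add: algebra_simps)
qed

lemma tail_prod_add_below:
  "i < k \<Longrightarrow> tail_prod m k (\<lambda>j. (if j = i then 1 else 0) + b j) = tail_prod m k b"
  by (rule tail_prod_cong) auto

lemma tail_prod_diff_below:
  "i < k \<Longrightarrow> tail_prod m k (\<lambda>j. b j - (if j = i then 1 else 0)) = tail_prod m k b"
  by (rule tail_prod_cong) auto

type_synonym qel = "(nat \<Rightarrow> int) \<times> int"

definition qmult :: "nat \<Rightarrow> qel \<Rightarrow> qel \<Rightarrow> qel" where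
  "qmult m p q = (\<lambda>i. fst p i + fst q i, snd p + snd q + fst p 0 * tail_prod m 1 (fst q))"

definition qldiv :: "nat \<Rightarrow> qel \<Rightarrow> qel \<Rightarrow> qel" where
  "qldiv m p q = (\<lambda>i. fst q i - fst p i,
     snd q - snd p - fst p 0 * tail_prod m 1 (\<lambda>i. fst q i - fst p i))"

definition qrdiv :: "nat \<Rightarrow> qel \<Rightarrow> qel \<Rightarrow> qel" where
  "qrdiv m q p = (\<lambda>i. fst q i - fst p i,
     snd q - snd p - (fst q 0 - fst p 0) * tail_prod m 1 (fst p))"

definition qloop :: "nat \<Rightarrow> qel monoid" where
  "qloop m = \<lparr>carrier = UNIV, monoid.mult = qmult m, monoid.one = ((\<lambda>i. 0), 0)\<rparr>"

lemma qloop_simps [simp]: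
  "carrier (qloop m) = UNIV" "p \<otimes>\<^bsub>qloop m\<^esub> q = qmult m p q" "\<one>\<^bsub>qloop m\<^esub> = ((\<lambda>i. 0), 0)"
  by (simp_all add: qloop_def)

text \<open>For \<open>m = 0\<close> the empty product is \<open>1\<close> and \<open>((\<lambda>i. 0), 0)\<close> is not a right identity.\<close>
lemma division_loop_qloop: "1 \<le> m \<Longrightarrow> division_loop (qloop m) (qldiv m) (qrdiv m)"
  by unfold_locales (auto simp: qmult_def qldiv_def qrdiv_def tail_prod_zero)

lemma qloop_centre: "1 \<le> m \<Longrightarrow> fst p = (\<lambda>i. 0) \<Longrightarrow> p \<in> loop_centre (qloop m)"
  by (simp add: loop_centre_def qmult_def tail_prod_zero algebra_simps)

definition add_loop :: "'a::ab_group_add monoid" where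
  "add_loop = \<lparr>carrier = UNIV, monoid.mult = (+), monoid.one = 0\<rparr>"

lemma loop_centre_add_loop: "loop_centre add_loop = UNIV"
  by (simp add: loop_centre_def add_loop_def algebra_simps)

primrec eval_term :: "nat \<Rightarrow> lterm \<Rightarrow> qel" where
  "eval_term m (Gen i) = ((\<lambda>j. if j = i then 1 else 0), 0)"
| "eval_term m E = ((\<lambda>i. 0), 0)"
| "eval_term m (Mul s t) = qmult m (eval_term m s) (eval_term m t)"
| "eval_term m (LDiv s t) = qldiv m (eval_term m s) (eval_term m t)"
| "eval_term m (RDiv s t) = qrdiv m (eval_term m s) (eval_term m t)"

definition eval_class :: "nat \<Rightarrow> lterm set \<Rightarrow> qel" where
  "eval_class m A = eval_term m (SOME t. t \<in> A)"

locale eval_setting =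
  fixes n m :: nat
  assumes one_le_m: "1 \<le> m"
begin

sublocale Q: division_loop "qloop m" "qldiv m" "qrdiv m"
  using one_le_m by (rule division_loop_qloop)

lemma qloop_laws:
  "qmult m ((\<lambda>i. 0), 0) p = p" "qmult m p ((\<lambda>i. 0), 0) = p"
  "qldiv m p (qmult m p q) = q" "qmult m p (qldiv m p q) = q"
  "qrdiv m (qmult m q p) p = q" "qmult m (qrdiv m q p) p = q"
  using Q.l_one[of p] Q.r_one[of p] Q.ldiv_mult[of p q] Q.mult_ldiv[of p q]
    Q.rdiv_mult[of p q] Q.mult_rdiv[of p q]
  by simp_all

lemma eval_term_leq: "leq s t \<Longrightarrow> eval_term m s = eval_term m t"
  by (induction rule: leq.induct) (simp_all add: qloop_laws)

lemma eval_class_lclass: "eval_class m (lclass t) = eval_term m t"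
  unfolding eval_class_def using eval_term_leq leq_some_lclass by metis

sublocale eval: loop_hom "free_loop n" free_ldiv free_rdiv "qloop m" "qldiv m" "qrdiv m" "eval_class m"
  by unfold_locales
    ((elim free_loop_cases)?; simp add: free_mult_lclass eval_class_lclass)+

end

section \<open>Left-normed commutators of left multiplications\<close>

definition shift :: "((nat \<Rightarrow> int) \<Rightarrow> int) \<Rightarrow> qel \<Rightarrow> qel" where
  "shift g q = (fst q, snd q + g (fst q))"

definition comm_shift :: "nat \<Rightarrow> nat \<Rightarrow> (nat \<Rightarrow> int) \<Rightarrow> int" where
  "comm_shift m k b = (-1) ^ k * tail_prod m (Suc k) b"

lemma shift_left_inv: "shift (\<lambda>b. - g b) (shift g q) = q"
  by (simp add: shift_def)

lemma qloop_gen_commutator: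
  assumes "1 \<le> m"
  shows "qmult m (eval_term m (Gen (Suc 0))) \<circ> qmult m (eval_term m (Gen 0)) \<circ>
      qldiv m (eval_term m (Gen (Suc 0))) \<circ> qldiv m (eval_term m (Gen 0)) = shift (comm_shift m (Suc 0))"
  using tail_prod_diff_head[of 1 m] assms
  by (auto simp: fun_eq_iff qmult_def qldiv_def shift_def comm_shift_def tail_prod_def [of m 2, symmetric]
      tail_prod_add_below tail_prod_diff_below)

lemma qloop_gen_commutator_step:
  assumes "Suc k \<le> m"
  shows "qmult m (eval_term m (Gen (Suc k))) \<circ> shift (comm_shift m k) \<circ>
      qldiv m (eval_term m (Gen (Suc k))) \<circ> shift (\<lambda>b. - comm_shift m k b) = shift (comm_shift m (Suc k))"
proof
  fix q :: qel
  have head: "tail_prod m (Suc k) (\<lambda>j. fst q j - (if j = Suc k then 1 else 0)) =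
      tail_prod m (Suc k) (fst q) - tail_prod m (Suc (Suc k)) (fst q)"
    by (rule tail_prod_diff_head[OF assms])
  show "(qmult m (eval_term m (Gen (Suc k))) \<circ> shift (comm_shift m k) \<circ>
      qldiv m (eval_term m (Gen (Suc k))) \<circ> shift (\<lambda>b. - comm_shift m k b)) q = shift (comm_shift m (Suc k)) q"
    by (simp add: qmult_def qldiv_def shift_def comm_shift_def tail_prod_add_below tail_prod_diff_below
        head right_diff_distrib)
qed

abbreviation free_lcs3 :: "nat \<Rightarrow> lterm set set" where
  "free_lcs3 n \<equiv> bruck_lcs (free_loop n) 3"

abbreviation free_quot3 :: "nat \<Rightarrow> lterm set set monoid" where
  "free_quot3 n \<equiv> quot_loop (free_loop n) (free_lcs3 n)"

lemma bruck_lcs_3: "bruck_lcs F 3 = loop_comm (loop_comm (carrier F) F) F"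
  by (simp add: bruck_lcs_def numeral_2_eq_2)

lemma normal_subloop_free_lcs3: "normal_subloop (free_lcs3 n) (free_loop n)"
  by (simp add: bruck_lcs_3 free.normal_subloop_loop_comm free.normal_subloop_carrier)

lemma bij_betw_free_quot3_left_mult:
  "A \<in> carrier (free_quot3 n) \<Longrightarrow>
    bij_betw (\<lambda>U. A \<otimes>\<^bsub>free_quot3 n\<^esub> U) (carrier (free_quot3 n)) (carrier (free_quot3 n))"
  by (rule free.bij_betw_quot_left_mult[OF normal_subloop_free_lcs3])

definition left_gen :: "nat \<Rightarrow> nat \<Rightarrow> lterm set set \<Rightarrow> lterm set set" where
  "left_gen n i = (\<lambda>U\<in>carrier (free_quot3 n).
     lcos (free_loop n) (lclass (Gen i)) (free_lcs3 n) \<otimes>\<^bsub>free_quot3 n\<^esub> U)"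

lemma left_gen_in_LMlt: "i < n \<Longrightarrow> left_gen n i \<in> carrier (LMlt (free_quot3 n))"
  unfolding left_gen_def
  by (rule left_mult_in_LMlt) (auto simp: quot_loop_def intro!: lclass_in_free_loop)

lemma left_comm_left_gen_in_LMlt:
  "k < n \<Longrightarrow> left_comm (LMlt (free_quot3 n)) (left_gen n) k \<in> carrier (LMlt (free_quot3 n))"
  using group.left_comm_closed[OF group_LMlt[OF bij_betw_free_quot3_left_mult]] left_gen_in_LMlt
  by simp

context eval_setting
begin

lemma fst_eval_class_loop_comm_carrier:
  assumes a: "a \<in> loop_comm (carrier (free_loop n)) (free_loop n)"
  shows "fst (eval_class m a) = (\<lambda>i. 0)"
proof
  fix i
  interpret coord: loop_hom "free_loop n" free_ldiv free_rdiv add_loop "\<lambda>x y. y - x" "\<lambda>y x. y - x"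
    "\<lambda>A. fst (eval_class m A) i"
    by unfold_locales (simp_all add: add_loop_def eval.hom_mult qmult_def)
  have "loop_comm (carrier (free_loop n)) (free_loop n) \<subseteq> kernel (free_loop n) add_loop (\<lambda>A. fst (eval_class m A) i)"
    by (rule coord.loop_comm_subset_kernel[OF free.normal_subloop_carrier])
      (auto simp: free.centre_defects_def free.ldiv_closed free.m_closed loop_centre_add_loop)
  then show "fst (eval_class m a) i = 0" using a by (auto simp: kernel_def add_loop_def)
qed

lemma free_lcs3_subset_kernel: "free_lcs3 n \<subseteq> kernel (free_loop n) (qloop m) (eval_class m)"
  unfolding bruck_lcs_3
proof (rule eval.loop_comm_subset_kernel)
  show "normal_subloop (loop_comm (carrier (free_loop n)) (free_loop n)) (free_loop n)"
    by (simp add: free.normal_subloop_loop_comm free.normal_subloop_carrier)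
  show "eval.L.centre_defects a x y \<subseteq> loop_comm (carrier (free_loop n)) (free_loop n)"
    if "a \<in> loop_comm (carrier (free_loop n)) (free_loop n)" "x \<in> carrier (free_loop n)"
      "y \<in> carrier (free_loop n)" for a x y
    using that free.loop_comm_subset[OF free.normal_subloop_carrier]
    by (intro free.centre_defects_subset_loop_comm) auto
  show "eval_class m ` loop_comm (carrier (free_loop n)) (free_loop n) \<subseteq> loop_centre (qloop m)"
    using fst_eval_class_loop_comm_carrier qloop_centre one_le_m by blast
qed

abbreviation quot_eval :: "lterm set set \<Rightarrow> qel" where
  "quot_eval \<equiv> quot_lift (free_loop n) (free_lcs3 n) (eval_class m)"

lemma semiconj_left_gen:
  "i < n \<Longrightarrow> semiconj_on (carrier (free_quot3 n)) quot_eval (left_gen n i) (qmult m (eval_term m (Gen i)))"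
  using eval.semiconj_quot_left_mult[OF normal_subloop_free_lcs3 free_lcs3_subset_kernel
      lclass_in_free_loop[of n "Gen i"]]
  by (simp add: left_gen_def eval_class_lclass)

lemma semiconj_left_comm_Suc:
  assumes "Suc k < n"
    and "semiconj_on (carrier (free_quot3 n)) quot_eval (left_comm (LMlt (free_quot3 n)) (left_gen n) k) f"
    and "\<And>q. f' (f q) = q"
  shows "semiconj_on (carrier (free_quot3 n)) quot_eval (left_comm (LMlt (free_quot3 n)) (left_gen n) (Suc k))
      (qmult m (eval_term m (Gen (Suc k))) \<circ> f \<circ> qldiv m (eval_term m (Gen (Suc k))) \<circ> f')"
  using semiconj_on_commutator[OF LMlt_eq subgroup_LMlt[OF bij_betw_free_quot3_left_mult]
      left_gen_in_LMlt left_comm_left_gen_in_LMlt semiconj_left_gen assms(2),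
      where fi = "qldiv m (eval_term m (Gen (Suc k)))" and fi' = f']
    qloop_laws(3) assms(1,3)
  by simp

lemma semiconj_left_comm:
  "1 \<le> k \<Longrightarrow> k \<le> m \<Longrightarrow> k < n \<Longrightarrow>
    semiconj_on (carrier (free_quot3 n)) quot_eval (left_comm (LMlt (free_quot3 n)) (left_gen n) k)
      (shift (comm_shift m k))"
proof (induction k)
  case 0
  then show ?case by simp
next
  case (Suc k)
  show ?case
  proof (cases "k = 0")
    case True
    have "semiconj_on (carrier (free_quot3 n)) quot_eval (left_comm (LMlt (free_quot3 n)) (left_gen n) (Suc 0))
        (qmult m (eval_term m (Gen (Suc 0))) \<circ> qmult m (eval_term m (Gen 0)) \<circ>
         qldiv m (eval_term m (Gen (Suc 0))) \<circ> qldiv m (eval_term m (Gen 0)))"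
      by (rule semiconj_left_comm_Suc) (use Suc.prems True semiconj_left_gen[of 0] in \<open>simp_all add: qloop_laws\<close>)
    then show ?thesis by (simp only: True qloop_gen_commutator[OF one_le_m])
  next
    case False
    have "semiconj_on (carrier (free_quot3 n)) quot_eval (left_comm (LMlt (free_quot3 n)) (left_gen n) (Suc k))
        (qmult m (eval_term m (Gen (Suc k))) \<circ> shift (comm_shift m k) \<circ>
         qldiv m (eval_term m (Gen (Suc k))) \<circ> shift (\<lambda>b. - comm_shift m k b))"
      by (rule semiconj_left_comm_Suc) (use Suc False shift_left_inv in auto)
    then show ?thesis by (simp only: qloop_gen_commutator_step Suc.prems)
  qed
qed

lemma quot_eval_one_coset:
  "quot_eval (lcos (free_loop n) (lclass E) (free_lcs3 n)) = ((\<lambda>i. 0), 0)"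
  using eval.quot_lift_lcos[OF normal_subloop_free_lcs3 free_lcs3_subset_kernel lclass_in_free_loop]
  by (simp add: eval_class_lclass)

end

lemma left_comm_left_gen_ne_one:
  assumes "k < n"
  shows "left_comm (LMlt (free_quot3 n)) (left_gen n) k \<noteq> \<one>\<^bsub>LMlt (free_quot3 n)\<^esub>"
proof -
  define U where "U = lcos (free_loop n) (lclass E) (free_lcs3 n)"
  have U: "U \<in> carrier (free_quot3 n)"
    unfolding U_def by (auto simp: quot_loop_def intro!: lclass_in_free_loop)
  show ?thesis
  proof (cases k)
    case 0
    interpret eval_setting n "Suc 0" by unfold_locales simp
    have "quot_eval U = ((\<lambda>i. 0), 0)" unfolding U_def by (rule quot_eval_one_coset)
    then have "qmult (Suc 0) (eval_term (Suc 0) (Gen 0)) (quot_eval U) \<noteq> quot_eval U"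
      by (simp add: qmult_def fun_eq_iff)
    then show ?thesis
      using semiconj_on_moves_point[OF semiconj_left_gen[of 0] U] assms 0 by (simp add: one_LMlt)
  next
    case (Suc j)
    interpret eval_setting n k by unfold_locales (simp add: Suc)
    have "quot_eval U = ((\<lambda>i. 0), 0)" unfolding U_def by (rule quot_eval_one_coset)
    then have "shift (comm_shift k k) (quot_eval U) \<noteq> quot_eval U"
      by (simp add: shift_def comm_shift_def tail_prod_empty)
    then show ?thesis
      using semiconj_on_moves_point[OF semiconj_left_comm[of k] U] assms Suc by (simp add: one_LMlt)
  qed
qed

theorem lemma4p2:
  fixes n :: nat
  assumes "n \<ge> 2"
  shows "gamma (LMlt (quot_loop (free_loop n) (bruck_lcs (free_loop n) 3))) (n - 1)
           \<noteq> {\<one>\<^bsub>LMlt (quot_loop (free_loop n) (bruck_lcs (free_loop n) 3))\<^esub>}"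
proof -
  let ?c = "left_comm (LMlt (free_quot3 n)) (left_gen n) (n - 2)"
  have "gamma (LMlt (free_quot3 n)) (n - 1) = gamma_aux (LMlt (free_quot3 n)) (n - 2)"
    using assms by (simp add: gamma_def numeral_2_eq_2)
  moreover have "?c \<in> gamma_aux (LMlt (free_quot3 n)) (n - 2)"
    using assms by (intro left_comm_in_gamma_aux left_gen_in_LMlt) simp
  moreover have "?c \<noteq> \<one>\<^bsub>LMlt (free_quot3 n)\<^esub>"
    using assms by (intro left_comm_left_gen_ne_one) simp
  ultimately show ?thesis by auto
qed

end
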